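(* Let $q$ be a prime power and let $n\ge 3$ be an odd integer. Let $f(x)$ be an irreducible monic polynomial of degree $n$ over $\mathbb{F}_{q^2}$. The following are equivalent: (1) $f(x)$ is self-conjugate-reciprocal; (2) $\mathrm{ord}(f(x))\in D_n$; (3) $f(x)=f_\beta(x):=\prod_{i=0}^{n-1}(x-\beta^{q^{2i}})$ for some primitive $d$-th root of unity $\beta$ with $d\in D_n$.
   Context: $D_n$ denotes the set of all positive divisors of $q^n+1$ that do not divide $q^k+1$ for any integer $0\le k<n$. For $f(x)\in\mathbb{F}_{q^2}[x]$ of degree $m$ with $f(0)\neq0$, the reciprocal is $f^*(x)=x^m f(0)^{-1}f(1/x)$, the conjugate of $g(x)=\sum g_ix^i$ is $\overline{g(x)}=\sum g_i^q x^i$, and the conjugate-reciprocal is $f^\dagger(x)=\overline{f^*(x)}$; $f$ is self-conjugate-reciprocal if $f=f^\dagger$. The order $\mathrm{ord}(f(x))$ is the smallest positive integer $s$ such that $f(x)$ divides $x^s-1$. *)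

theory Defs
  imports "HOL-Computational_Algebra.Computational_Algebra"
begin

definition Dset :: "nat \<Rightarrow> nat \<Rightarrow> nat set" where
  "Dset q n = {d. d > 0 \<and> d dvd q ^ n + 1 \<and> (\<forall>k<n. \<not> d dvd q ^ k + 1)}"

definition prime_power :: "nat \<Rightarrow> bool" where
  "prime_power q \<longleftrightarrow> (\<exists>p k. prime p \<and> k > 0 \<and> q = p ^ k)"

text \<open>Reciprocal f^*(x) = x^m f(0)^{-1} f(1/x) (for f(0) nonzero).\<close>
definition recip_poly :: "'a::field poly \<Rightarrow> 'a poly" where
  "recip_poly f = smult (inverse (coeff f 0)) (reflect_poly f)"

definition conj_poly :: "nat \<Rightarrow> 'a::field poly \<Rightarrow> 'a poly" where
  "conj_poly q g = map_poly (\<lambda>c. c ^ q) g"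

definition conj_recip :: "nat \<Rightarrow> 'a::field poly \<Rightarrow> 'a poly" where
  "conj_recip q f = conj_poly q (recip_poly f)"

definition self_conj_recip :: "nat \<Rightarrow> 'a::field poly \<Rightarrow> bool" where
  "self_conj_recip q f \<longleftrightarrow> f = conj_recip q f"

definition poly_ord :: "'a::field poly \<Rightarrow> nat" where
  "poly_ord f = (LEAST s. s > 0 \<and> f dvd (monom 1 s - 1))"

definition primitive_root_of_unity :: "nat \<Rightarrow> 'a::field \<Rightarrow> bool" where
  "primitive_root_of_unity d b \<longleftrightarrow> d > 0 \<and> b ^ d = 1 \<and> (\<forall>k. 0 < k \<and> k < d \<longrightarrow> b ^ k \<noteq> 1)"

definition f_beta :: "nat \<Rightarrow> nat \<Rightarrow> 'b::field \<Rightarrow> 'b poly" where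
  "f_beta q n b = (\<Prod>i<n. [:- (b ^ (q ^ (2 * i))), 1:])"

end

(*
  Work in F = F_{q^2} (type 'a) and in E = F_{q^{2n}} (type 'b), into which F embeds by phi,
  and let beta be a root of f in E. Evaluation at beta embeds the polynomials of degree < n
  over F into E; counting the fixed points of y |-> y^{q^{2s}} then shows that
  beta^{q^{2m}} = beta exactly when n divides m. Hence the roots of f are the n distinct
  conjugates beta^{q^{2i}}, so f = f_beta and ord f = ord beta.

  The roots of the conjugate-reciprocal of f are the gamma^{-q} for the roots gamma of f. If f
  is self-conjugate-reciprocal, then beta^{-q} = beta^{q^{2i}} with 1 <= i <= n, i.e.
  beta^{q^{2i-1}} = beta^{-1}; applying this twice gives beta^{q^{2(2i-1)}} = beta, so n
  divides the odd number 2i - 1 < 2n, whence 2i - 1 = n and ord beta divides q^n + 1.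
  Conversely beta^{q^n} = beta^{-1} makes beta^{-q} = beta^{q^{n+1}} a common root of f and
  its conjugate-reciprocal. Finally ord beta never divides q^k + 1 for k < n: the same
  argument gives n | k, and k = 0 would force beta = 1 or beta = -1, which lie in F.
*)

theory Submission
  imports "Berlekamp_Zassenhaus.Finite_Field" Defs
begin

(* Defs is imported last so that coeff denotes Polynomial.coeff rather than the
   HOL-Algebra constant of the same name, which Finite_Field brings into scope. *)

section \<open>Finite fields\<close>

lemma bij_betw_coeffs_poly_degree_less:
  assumes "n > 0"
  shows "bij_betw (\<lambda>g. map (coeff g) [0..<n]) {g :: 'c::zero poly. degree g < n} {xs. length xs = n}"
proof (rule bij_betw_byWitness[where f' = Poly])
  show "\<forall>g\<in>{g. degree g < n}. Poly (map (coeff g) [0..<n]) = g"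
    by (auto intro!: poly_eqI simp: nth_default_def coeff_eq_0)
  show "\<forall>xs\<in>{xs. length xs = n}. map (coeff (Poly xs)) [0..<n] = xs"
    by (auto intro!: nth_equalityI simp: nth_default_nth)
  show "Poly ` {xs. length xs = n} \<subseteq> {g. degree g < n}"
    using assms by (auto intro!: degree_lessI simp: nth_default_def)
qed auto

lemma
  assumes "n > 0"
  shows finite_poly_degree_less: "finite {g :: 'c::{zero,finite} poly. degree g < n}"
    and card_poly_degree_less: "card {g :: 'c::{zero,finite} poly. degree g < n} = CARD('c) ^ n"
  using bij_betw_finite[OF bij_betw_coeffs_poly_degree_less[OF assms, where 'c = 'c]]
    bij_betw_same_card[OF bij_betw_coeffs_poly_degree_less[OF assms, where 'c = 'c]]
    finite_lists_length_eq[of "UNIV :: 'c set" n] card_lists_length_eq[of "UNIV :: 'c set" n]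
  by simp_all

lemma irreducible_mult_mod_permutes:
  fixes f g :: "'c::{field,finite} poly"
  assumes f: "irreducible f" and g: "\<not> f dvd g"
  defines "S \<equiv> {h. h \<noteq> 0 \<and> degree h < degree f}"
  shows "bij_betw (\<lambda>h. g * h mod f) S S"
proof -
  have f0: "f \<noteq> 0" and prime: "prime_elem f"
    using f by (auto simp: field_poly_irreducible_imp_prime)
  have not_dvd: "\<not> f dvd h" if "h \<in> S" for h
    using that dvd_imp_degree[of f h] f0 by (auto simp: S_def)
  have into: "g * h mod f \<in> S" if "h \<in> S" for h
    using not_dvd[OF that] g prime degree_mod_less'[OF f0]
    by (auto simp: S_def mod_eq_0_iff_dvd prime_elem_dvd_mult_iff)
  have "inj_on (\<lambda>h. g * h mod f) S"
  proof (rule inj_onI)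
    fix h1 h2 assume h: "h1 \<in> S" "h2 \<in> S" and eq: "g * h1 mod f = g * h2 mod f"
    then have "f dvd g * (h1 - h2)"
      by (simp add: mod_eq_dvd_iff right_diff_distrib)
    then have "f dvd h1 - h2"
      using g prime by (simp add: prime_elem_dvd_mult_iff)
    moreover have "degree (h1 - h2) < degree f"
      using h by (intro degree_diff_less) (auto simp: S_def)
    ultimately show "h1 = h2"
      using dvd_imp_degree[of f "h1 - h2"] f0 by fastforce
  qed
  moreover have "finite S"
    using finite_poly_degree_less[of "degree f", where 'c = 'c] f
    by (auto simp: S_def irreducible_def intro: finite_subset)
  ultimately show ?thesis
    using into by (simp add: bij_betw_def endo_inj_surj image_subsetI)
qed

lemma prime_elem_dvd_prod_iff:
  fixes p :: "'a::comm_semiring_1"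
  assumes "prime_elem p" and "finite A"
  shows "p dvd prod g A \<longleftrightarrow> (\<exists>x\<in>A. p dvd g x)"
  using assms(2) by induction (use assms(1) in \<open>auto simp: prime_elem_not_unit prime_elem_dvd_mult_iff\<close>)

lemma irreducible_dvd_power_card_degree_less:
  fixes f g :: "'c::{field,finite} poly"
  assumes f: "irreducible f" and deg: "degree g < degree f"
  shows "f dvd g ^ (CARD('c) ^ degree f) - g"
proof (cases "f dvd g")
  case True
  have "g = 0"
  proof (rule ccontr)
    assume "g \<noteq> 0"
    with True have "degree f \<le> degree g"
      by (rule dvd_imp_degree_le)
    with deg show False by simp
  qed
  then show ?thesis
    by (simp add: zero_power)
next
  case False
  define S where "S = {h :: 'c poly. h \<noteq> 0 \<and> degree h < degree f}"
  have prime: "prime_elem f"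
    using f by (rule field_poly_irreducible_imp_prime)
  have n: "degree f > 0"
    using deg by simp
  have S: "S = {h. degree h < degree f} - {0}"
    by (auto simp: S_def)
  then have fin: "finite S" and card: "card S + 1 = CARD('c) ^ degree f"
    using finite_poly_degree_less[OF n, where 'c = 'c] card_poly_degree_less[OF n, where 'c = 'c] n
    by (simp_all add: card_Diff_singleton)
  have "(\<Prod>h\<in>S. g * h mod f) = \<Prod>S"
    using prod.reindex_bij_betw[OF irreducible_mult_mod_permutes[OF f False], of "\<lambda>h. h"]
    unfolding S_def .
  then have "\<Prod>S mod f = (\<Prod>h\<in>S. g * h) mod f"
    by (metis mod_prod_eq)
  then have "f dvd g ^ card S * \<Prod>S - \<Prod>S"
    by (simp add: prod.distrib mod_eq_dvd_iff dvd_diff_commute)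
  then have "f dvd (g ^ card S - 1) * \<Prod>S"
    by (simp add: left_diff_distrib)
  moreover have "\<not> f dvd \<Prod>S"
    using prime fin dvd_imp_degree_le[of f] by (force simp: prime_elem_dvd_prod_iff S_def)
  ultimately have "f dvd g * (g ^ card S - 1)"
    using prime by (simp add: prime_elem_dvd_mult_iff)
  then show ?thesis
    by (simp add: right_diff_distrib flip: card power_Suc)
qed

lemma irreducible_dvd_power_card_degree:
  fixes f g :: "'c::{field,finite} poly"
  assumes f: "irreducible f"
  shows "f dvd g ^ (CARD('c) ^ degree f) - g"
proof -
  let ?N = "CARD('c) ^ degree f"
  have "degree f > 0" and "f \<noteq> 0"
    using f by (auto simp: irreducible_def is_unit_iff_degree)
  then have "degree (g mod f) < degree f"
    using degree_mod_less[of f g] by auto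
  then have "f dvd (g mod f) ^ ?N - g mod f"
    by (rule irreducible_dvd_power_card_degree_less[OF f])
  moreover have "((g mod f) ^ ?N - g mod f) mod f = (g ^ ?N - g) mod f"
    by (intro mod_diff_cong power_mod mod_mod_trivial)
  ultimately show ?thesis
    by (simp add: dvd_eq_mod_eq_0)
qed

lemma finite_field_power_card_eq_self:
  fixes x :: "'c::{field,finite}"
  shows "x ^ CARD('c) = x"
proof -
  have "[:0, 1:] dvd [:x:] ^ CARD('c) - [:x:]"
    using irreducible_dvd_power_card_degree[of "[:0, 1:]" "[:x:]"]
    by (simp add: irreducible_linear_field_poly)
  then have "poly ([:x:] ^ CARD('c) - [:x:]) 0 = 0"
    by (metis poly_eq_0_iff_dvd minus_zero)
  then show ?thesis
    by simp
qed

lemma finite_field_power_card_power_eq_self: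
  fixes x :: "'c::{field,finite}"
  shows "x ^ (CARD('c) ^ k) = x"
  by (induction k) (simp_all add: finite_field_power_card_eq_self power_mult)

lemma CHAR_eq_if_card_eq_prime_power:
  assumes "prime p" and "CARD('c::{field,finite}) = p ^ k"
  shows "CHAR('c) = p"
proof -
  have "prime CHAR('c)"
    by (simp add: finite_imp_CHAR_pos prime_CHAR_semidom)
  moreover have "CHAR('c) dvd p ^ k"
    using CHAR_dvd_CARD[where 'a = 'c] assms(2) by simp
  ultimately show ?thesis
    using assms(1) prime_dvd_power primes_dvd_imp_eq by blast
qed

lemma prime_CHAR_power_inj:
  fixes x y :: "'c::field"
  assumes "prime CHAR('c)" and "x ^ (CHAR('c) ^ j) = y ^ (CHAR('c) ^ j)"
  shows "x = y"
proof -
  have "x ^ (CHAR('c) ^ j) = (x - y) ^ (CHAR('c) ^ j) + y ^ (CHAR('c) ^ j)"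
    using freshmans_dream'[OF assms(1), of _ j "x - y" y] by simp
  with assms(2) show ?thesis
    by simp
qed

lemma prod_linear_factors_dvd:
  fixes p :: "'c::idom poly"
  assumes "finite A" and "\<And>a. a \<in> A \<Longrightarrow> poly p a = 0"
  shows "(\<Prod>a\<in>A. [:- a, 1:]) dvd p"
  using assms
proof (induction A arbitrary: p)
  case (insert a A)
  obtain r where p: "p = [:- a, 1:] * r"
    using insert.prems poly_eq_0_iff_dvd by blast
  have "poly r b = 0" if "b \<in> A" for b
    using insert.prems[of b] insert.hyps(2) that by (auto simp: p)
  then have "(\<Prod>b\<in>A. [:- b, 1:]) dvd r"
    using insert.IH by blast
  then show ?case
    unfolding p prod.insert[OF insert.hyps] by (rule mult_dvd_mono[OF dvd_refl])
qed simp

lemma monic_dvd_eq: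
  fixes d p :: "'c::idom poly"
  assumes "d dvd p" and "degree d = degree p" and "lead_coeff d = 1" and "lead_coeff p = 1"
  shows "d = p"
proof -
  obtain r where p: "p = d * r"
    using assms(1) by blast
  have "r \<noteq> 0" "d \<noteq> 0"
    using assms(4) by (auto simp: p)
  then have "degree r = 0"
    using assms(2) by (simp add: p degree_mult_eq)
  then have "r = [:lead_coeff r:]"
    by (metis degree_0_id)
  moreover have "lead_coeff r = 1"
    using assms(3,4) by (simp add: p lead_coeff_mult)
  ultimately show ?thesis
    by (simp add: p)
qed

lemma irreducible_no_root:
  fixes f :: "'c::field poly"
  assumes "irreducible f" and "degree f \<ge> 2"
  shows "poly f a \<noteq> 0"
proof
  assume "poly f a = 0"
  then have "[:- a, 1:] dvd f"
    by (simp add: poly_eq_0_iff_dvd)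
  then have "f dvd [:- a, 1:]"
    using assms(1) by (auto dest: irreducibleD' simp: is_unit_iff_degree)
  then have "degree f \<le> 1"
    using dvd_imp_degree_le[of f "[:- a, 1:]"] by simp
  with assms(2) show False
    by simp
qed

lemma degree_monom_minus_monom_1:
  assumes "M \<ge> 2"
  shows "degree (monom (1 :: 'c::idom) M - monom 1 1) = M"
  unfolding diff_conv_add_uminus using assms
  by (subst degree_add_eq_left) (simp_all add: degree_monom_eq)

lemma card_power_fixed_points_le:
  assumes "M \<ge> 2"
  shows "card {y :: 'c::idom. y ^ M = y} \<le> M"
proof -
  have "{y :: 'c. y ^ M = y} = {y. poly (monom 1 M - monom 1 1) y = 0}"
    by (simp add: poly_monom)
  moreover have "monom (1 :: 'c) M - monom 1 1 \<noteq> 0"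
    using degree_monom_minus_monom_1[OF assms, where 'c = 'c] assms by auto
  ultimately show ?thesis
    using card_poly_roots_bound degree_monom_minus_monom_1[OF assms, where 'c = 'c] by metis
qed

context field_hom
begin

lemma map_poly_reflect_poly: "map_poly hom (reflect_poly g) = reflect_poly (map_poly hom g)"
  by (rule poly_eqI) (simp add: coeff_reflect_poly)

lemma irreducible_dvd_of_common_root:
  assumes f: "irreducible f"
    and fx: "poly (map_poly hom f) x = 0" and gx: "poly (map_poly hom g) x = 0"
  shows "f dvd g"
proof -
  \<comment> \<open>\<open>h\<close> below is the minimal polynomial of \<open>x\<close> over the domain of \<open>hom\<close>\<close>
  define K where "K = {h. h \<noteq> 0 \<and> poly (map_poly hom h) x = 0}"
  have "f \<in> K"
    using f fx by (auto simp: K_def)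
  then obtain h where hK: "h \<in> K" and min: "\<And>k. k \<in> K \<Longrightarrow> degree h \<le> degree k"
    using ex_has_least_nat[of "\<lambda>k. k \<in> K" f degree] by blast
  have h_dvd: "h dvd k" if kx: "poly (map_poly hom k) x = 0" for k
  proof (rule ccontr)
    assume "\<not> h dvd k"
    then have "k mod h \<noteq> 0"
      by (simp add: mod_eq_0_iff_dvd)
    moreover have "poly (map_poly hom (k mod h)) x = 0"
    proof -
      have "poly (map_poly hom (k mod h)) x = poly (map_poly hom k mod map_poly hom h) x"
        by (simp only: map_poly_mod)
      also have "\<dots> = 0"
        using kx hK by (simp add: K_def flip: minus_div_mult_eq_mod)
      finally show ?thesis .
    qed
    ultimately have "k mod h \<in> K"
      by (simp add: K_def)
    then have "degree h \<le> degree (k mod h)"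
      by (rule min)
    moreover have "degree (k mod h) < degree h"
      using degree_mod_less'[of h k] hK \<open>k mod h \<noteq> 0\<close> by (simp add: K_def)
    ultimately show False
      by simp
  qed
  have "\<not> is_unit h"
  proof
    assume "is_unit h"
    with hK have "degree h = 0"
      by (simp add: K_def is_unit_iff_degree)
    then obtain c where "h = [:c:]"
      by (rule degree_eq_zeroE)
    with hK show False
      by (simp add: K_def hom_distribs)
  qed
  with h_dvd[OF fx] f have "f dvd h"
    by (auto dest: irreducibleD')
  with h_dvd[OF gx] show ?thesis
    by (blast intro: dvd_trans)
qed

end

section \<open>Primitive roots of unity and the order of a polynomial\<close>

lemma primitive_root_of_unity_power_eq_1_iff:
  assumes "primitive_root_of_unity d b"
  shows "b ^ s = 1 \<longleftrightarrow> d dvd s"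
proof -
  have d: "d > 0" "b ^ d = 1" and min: "\<And>k. 0 < k \<Longrightarrow> k < d \<Longrightarrow> b ^ k \<noteq> 1"
    using assms by (auto simp: primitive_root_of_unity_def)
  have "b ^ s = (b ^ d) ^ (s div d) * b ^ (s mod d)"
    by (simp flip: power_mult power_add)
  then have "b ^ s = b ^ (s mod d)"
    using d by simp
  moreover have "b ^ (s mod d) \<noteq> 1" if "s mod d \<noteq> 0"
    using min[of "s mod d"] d that by simp
  ultimately show ?thesis
    by (metis dvd_eq_mod_eq_0 power_0)
qed

lemma ex_primitive_root_of_unity:
  assumes "b ^ m = 1" and "m > 0"
  shows "\<exists>d. primitive_root_of_unity d b"
proof -
  define d where "d = (LEAST s. s > 0 \<and> b ^ s = 1)"
  have "d > 0 \<and> b ^ d = 1"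
    unfolding d_def by (rule LeastI[of _ m]) (use assms in simp)
  moreover have "b ^ k \<noteq> 1" if "0 < k" "k < d" for k
    using not_less_Least[of k "\<lambda>s. s > 0 \<and> b ^ s = 1"] that unfolding d_def by blast
  ultimately show ?thesis
    by (auto simp: primitive_root_of_unity_def)
qed

lemma poly_ord_eqI:
  assumes "\<And>s. f dvd monom 1 s - 1 \<longleftrightarrow> b ^ s = 1" and "primitive_root_of_unity d b"
  shows "poly_ord f = d"
  unfolding poly_ord_def
proof (rule Least_equality)
  show "d > 0 \<and> f dvd monom 1 d - 1"
    using assms by (simp add: primitive_root_of_unity_def)
  show "d \<le> s" if "s > 0 \<and> f dvd monom 1 s - 1" for s
    using that assms primitive_root_of_unity_power_eq_1_iff[OF assms(2), of s]
    by (auto dest: dvd_imp_le)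
qed

section \<open>The roots of an irreducible polynomial in an extension field\<close>

locale finite_field_extension = field_hom \<phi>
  for \<phi> :: "'a::{field,finite} \<Rightarrow> 'b::{field,finite}" +
  fixes p k n :: nat
  assumes prime_p: "prime p"
    and card_base: "CARD('a) = p ^ k"
    and card_ext: "CARD('b) = CARD('a) ^ n"
begin

sublocale map_poly_hom: map_poly_idom_hom \<phi> ..

lemma card_base_ge_2: "CARD('a) \<ge> 2"
  using card_mono[of UNIV "{0 :: 'a, 1}"] by simp

lemma CHAR_ext: "CHAR('b) = p"
  using CHAR_eq_if_card_eq_prime_power[OF prime_p, of "k * n"] card_base card_ext
  by (simp add: power_mult)

lemma power_prime_power_add: "(x + y :: 'b) ^ (p ^ j) = x ^ (p ^ j) + y ^ (p ^ j)"
  using freshmans_dream'[where 'a = 'b, of "CHAR('b) ^ j" j x y] CHAR_ext prime_p by simp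

lemma poly_map_power_prime_power:
  "poly (map_poly (\<lambda>c. c ^ (p ^ j)) G) (y ^ (p ^ j)) = poly G y ^ (p ^ j)" for G :: "'b poly"
proof (induction G rule: pCons_induct)
  case (pCons a G)
  then show ?case
    by (simp add: map_poly_pCons power_mult_distrib power_prime_power_add)
qed (simp add: prime_gt_0_nat[OF prime_p])

lemma power_prime_power_inj: "(x :: 'b) ^ (p ^ j) = y ^ (p ^ j) \<Longrightarrow> x = y"
  using prime_CHAR_power_inj[of x j y] CHAR_ext prime_p by simp

lemma map_poly_power_map_poly:
  assumes "m > 0"
  shows "map_poly (\<lambda>c. c ^ m) (map_poly \<phi> g) = map_poly \<phi> (map_poly (\<lambda>c. c ^ m) g)"
  using assms by (simp add: map_poly_map_poly o_def hom_distribs)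

lemma poly_map_poly_power_card:
  "poly (map_poly \<phi> g) (y ^ (CARD('a) ^ i)) = poly (map_poly \<phi> g) y ^ (CARD('a) ^ i)"
proof -
  have "map_poly (\<lambda>c. c ^ (CARD('a) ^ i)) g = g"
    by (simp add: finite_field_power_card_power_eq_self map_poly_idI)
  then show ?thesis
    using poly_map_power_prime_power[of "k * i" "map_poly \<phi> g" y]
      map_poly_power_map_poly[of "CARD('a) ^ i" g] prime_gt_0_nat[OF prime_p]
    by (simp add: card_base power_mult)
qed

end

locale irreducible_poly_extension = finite_field_extension \<phi> p k n
  for \<phi> :: "'a::{field,finite} \<Rightarrow> 'b::{field,finite}" and p k n +
  fixes f :: "'a poly"
  assumes irreducible: "irreducible f"
    and monic: "lead_coeff f = 1"
    and degree: "degree f = n"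
begin

lemma n_pos: "n > 0"
  using irreducible degree by (auto simp: irreducible_def is_unit_iff_degree)

lemma ex_root: "\<exists>\<beta>. poly (map_poly \<phi> f) \<beta> = 0"
proof (rule ccontr)
  assume no_root: "\<not> (\<exists>\<beta>. poly (map_poly \<phi> f) \<beta> = 0)"
  define N where "N = CARD('b)"
  have "CARD('a) ^ n \<ge> CARD('a) ^ 1"
    using n_pos by (intro power_increasing) auto
  moreover note card_base_ge_2
  ultimately have N: "N \<ge> 2"
    by (simp add: N_def card_ext)
  have "f dvd monom 1 N - monom 1 1"
    using irreducible_dvd_power_card_degree[OF irreducible, of "monom 1 1"]
    by (simp add: N_def card_ext degree monom_power)
  then obtain r where r: "monom 1 N - monom 1 1 = f * r"
    by (elim dvdE)
  have "r \<noteq> 0"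
    using degree_monom_minus_monom_1[OF N, where 'c = 'a] r N by auto
  then have "degree r = N - n"
    using r degree_monom_minus_monom_1[OF N, where 'c = 'a] irreducible
    by (auto simp: degree_mult_eq degree)
  moreover have "poly (map_poly \<phi> r) y = 0" for y
  proof -
    have "poly (map_poly \<phi> (f * r)) y = 0"
      unfolding r[symmetric] using finite_field_power_card_eq_self[of y]
      by (simp add: N_def hom_distribs poly_monom)
    with no_root show ?thesis
      by (simp add: hom_distribs)
  qed
  then have "card (UNIV :: 'b set) \<le> degree r"
    using card_poly_roots_bound[of "map_poly \<phi> r"] \<open>r \<noteq> 0\<close> by simp
  ultimately show False
    using N n_pos by (simp add: N_def)
qed

lemma root_dvd_iff:
  assumes root: "poly (map_poly \<phi> f) \<beta> = 0"
  shows "f dvd g \<longleftrightarrow> poly (map_poly \<phi> g) \<beta> = 0"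
proof
  assume "f dvd g"
  then obtain r where "g = f * r" ..
  with root show "poly (map_poly \<phi> g) \<beta> = 0"
    by (simp add: hom_distribs)
next
  assume "poly (map_poly \<phi> g) \<beta> = 0"
  with irreducible root show "f dvd g"
    by (rule irreducible_dvd_of_common_root)
qed

lemma root_power_card:
  assumes "poly (map_poly \<phi> f) \<beta> = 0"
  shows "poly (map_poly \<phi> f) (\<beta> ^ (CARD('a) ^ i)) = 0"
  using assms by (simp add: poly_map_poly_power_card)

lemma inj_on_poly_root:
  assumes root: "poly (map_poly \<phi> f) \<beta> = 0"
  shows "inj_on (\<lambda>g. poly (map_poly \<phi> g) \<beta>) {g. degree g < n}"
proof (rule inj_onI)
  fix g h assume g: "g \<in> {g. degree g < n}" and h: "h \<in> {g. degree g < n}"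
    and eq: "poly (map_poly \<phi> g) \<beta> = poly (map_poly \<phi> h) \<beta>"
  then have "f dvd g - h"
    using root_dvd_iff[OF root] by (simp add: hom_distribs)
  moreover have "degree (g - h) < degree f"
    using g h by (auto simp: degree intro: degree_diff_less)
  ultimately show "g = h"
    using dvd_imp_degree_le[of f "g - h"] by fastforce
qed

lemma root_power_card_eq_self_iff:
  assumes root: "poly (map_poly \<phi> f) \<beta> = 0"
  shows "\<beta> ^ (CARD('a) ^ m) = \<beta> \<longleftrightarrow> n dvd m"
proof
  assume "n dvd m"
  then obtain t where "m = n * t" ..
  then show "\<beta> ^ (CARD('a) ^ m) = \<beta>"
    using finite_field_power_card_power_eq_self[of \<beta> t] by (simp add: card_ext power_mult)
next
  assume fixed: "\<beta> ^ (CARD('a) ^ m) = \<beta>"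
  define s where "s = m mod n"
  have "CARD('a) ^ m = CARD('b) ^ (m div n) * CARD('a) ^ s"
    by (simp add: s_def card_ext flip: power_mult power_add)
  then have fixed_s: "\<beta> ^ (CARD('a) ^ s) = \<beta>"
    using fixed finite_field_power_card_power_eq_self[of \<beta> "m div n"] by (simp add: power_mult)
  show "n dvd m"
  proof (rule ccontr)
    assume "\<not> n dvd m"
    then have s: "0 < s" "s < n"
      using n_pos by (auto simp: s_def dvd_eq_mod_eq_0)
    have "(\<lambda>g. poly (map_poly \<phi> g) \<beta>) ` {g. degree g < n} \<subseteq> {y. y ^ (CARD('a) ^ s) = y}"
      using fixed_s by (auto simp flip: poly_map_poly_power_card)
    then have "card {g :: 'a poly. degree g < n} \<le> card {y :: 'b. y ^ (CARD('a) ^ s) = y}"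
      using card_inj_on_le[OF inj_on_poly_root[OF root]] by simp
    also have "\<dots> \<le> CARD('a) ^ s"
      using card_base_ge_2 s self_le_power[of "CARD('a)" s]
      by (intro card_power_fixed_points_le) auto
    also have "\<dots> < CARD('a) ^ n"
      using card_base_ge_2 s by (intro power_strict_increasing) auto
    finally show False
      using card_poly_degree_less[OF n_pos, where 'c = 'a] by simp
  qed
qed

lemma conjugate_roots_distinct:
  assumes root: "poly (map_poly \<phi> f) \<beta> = 0"
  shows "inj_on (\<lambda>i. \<beta> ^ (CARD('a) ^ i)) {..<n}"
proof (rule linorder_inj_onI')
  fix i j assume ij: "i < j" "j \<in> {..<n}"
  show "\<beta> ^ (CARD('a) ^ i) \<noteq> \<beta> ^ (CARD('a) ^ j)"
  proof
    assume "\<beta> ^ (CARD('a) ^ i) = \<beta> ^ (CARD('a) ^ j)"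
    moreover have "CARD('a) ^ j = CARD('a) ^ (j - i) * p ^ (k * i)"
      using ij by (simp add: card_base power_mult flip: power_add)
    ultimately have "\<beta> ^ (p ^ (k * i)) = (\<beta> ^ (CARD('a) ^ (j - i))) ^ (p ^ (k * i))"
      by (simp add: card_base power_mult)
    then have "\<beta> ^ (CARD('a) ^ (j - i)) = \<beta>"
      by (metis power_prime_power_inj)
    then have "n dvd j - i"
      using root_power_card_eq_self_iff[OF root] by simp
    with ij show False
      by (auto dest: dvd_imp_le)
  qed
qed

lemma map_poly_eq_prod_conjugates:
  assumes root: "poly (map_poly \<phi> f) \<beta> = 0"
  shows "map_poly \<phi> f = (\<Prod>i<n. [:- (\<beta> ^ (CARD('a) ^ i)), 1:])"
proof (rule monic_dvd_eq[symmetric])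
  have "(\<Prod>a\<in>(\<lambda>i. \<beta> ^ (CARD('a) ^ i)) ` {..<n}. [:- a, 1:]) dvd map_poly \<phi> f"
    using root_power_card[OF root] by (intro prod_linear_factors_dvd) auto
  then show "(\<Prod>i<n. [:- (\<beta> ^ (CARD('a) ^ i)), 1:]) dvd map_poly \<phi> f"
    by (simp add: prod.reindex[OF conjugate_roots_distinct[OF root]])
  show "degree (\<Prod>i<n. [:- (\<beta> ^ (CARD('a) ^ i)), 1:]) = degree (map_poly \<phi> f)"
    by (subst degree_prod_sum_eq) (auto simp: degree)
  show "lead_coeff (\<Prod>i<n. [:- (\<beta> ^ (CARD('a) ^ i)), 1:]) = 1"
    by (simp add: lead_coeff_prod)
  show "lead_coeff (map_poly \<phi> f) = 1"
    by (simp add: monic)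
qed

lemma poly_ord_eq_order_of_root:
  assumes root: "poly (map_poly \<phi> f) \<beta> = 0" and "primitive_root_of_unity d \<beta>"
  shows "poly_ord f = d"
  by (rule poly_ord_eqI[OF _ assms(2)]) (simp add: root_dvd_iff[OF root] hom_distribs poly_monom)

end

section \<open>Self-conjugate-reciprocal polynomials\<close>

lemma coeff_conj_recip:
  "q > 0 \<Longrightarrow> coeff (conj_recip q f) i = (inverse (coeff f 0) * coeff (reflect_poly f) i) ^ q"
  by (simp add: conj_recip_def conj_poly_def recip_poly_def coeff_map_poly)

lemma
  fixes f :: "'c::field poly"
  assumes "poly f 0 \<noteq> 0" and "q > 0"
  shows degree_conj_recip: "degree (conj_recip q f) = degree f"
    and lead_coeff_conj_recip: "lead_coeff (conj_recip q f) = 1"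
proof -
  have top: "coeff (conj_recip q f) (degree f) = 1"
    using assms by (simp add: coeff_conj_recip coeff_reflect_poly poly_0_coeff_0)
  have "coeff (conj_recip q f) i = 0" if "i > degree f" for i
    using that assms by (simp add: coeff_conj_recip coeff_reflect_poly)
  then have "degree (conj_recip q f) \<le> degree f"
    by (meson degree_le leI)
  moreover have "degree f \<le> degree (conj_recip q f)"
    using top by (intro le_degree) simp
  ultimately show "degree (conj_recip q f) = degree f"
    by simp
  with top show "lead_coeff (conj_recip q f) = 1"
    by simp
qed

locale conj_recip_setting = irreducible_poly_extension \<phi> p "2 * e" n f
  for \<phi> :: "'a::{field,finite} \<Rightarrow> 'b::{field,finite}" and p e n f +
  fixes q :: nat
  assumes q_def: "q = p ^ e" and odd_n: "odd n" and n_ge_3: "n \<ge> 3"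
begin

lemma card_base_eq: "CARD('a) = q ^ 2"
  by (simp add: card_base q_def power_mult mult.commute)

lemma q_pos: "q > 0"
  using prime_p by (simp add: q_def prime_gt_0_nat)

lemma poly_0_nonzero: "poly f 0 \<noteq> 0"
  using irreducible n_ge_3 by (intro irreducible_no_root) (simp_all add: degree)

lemma root_nonzero:
  assumes "poly (map_poly \<phi> f) \<beta> = 0"
  shows "\<beta> \<noteq> 0"
proof
  assume "\<beta> = 0"
  with assms have "\<phi> (poly f 0) = 0"
    by (metis hom_zero poly_map_poly)
  with poly_0_nonzero show False
    by simp
qed

lemma ex_order_of_root:
  assumes "poly (map_poly \<phi> f) \<beta> = 0"
  shows "\<exists>d. primitive_root_of_unity d \<beta>"
proof (rule ex_primitive_root_of_unity)
  have "\<beta> * \<beta> ^ (CARD('b) - 1) = \<beta> * 1"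
    using finite_field_power_card_eq_self[of \<beta>] by (simp flip: power_Suc)
  then show "\<beta> ^ (CARD('b) - 1) = 1"
    using root_nonzero[OF assms] by (metis mult_left_cancel)
  show "CARD('b) - 1 > 0"
    using card_mono[of UNIV "{0 :: 'b, 1}"] by simp
qed

lemma poly_conj_poly: "poly (map_poly \<phi> (conj_poly q g)) (y ^ q) = poly (map_poly \<phi> g) y ^ q"
  using poly_map_power_prime_power[of e "map_poly \<phi> g" y] map_poly_power_map_poly[of q g] q_pos
  by (simp add: conj_poly_def q_def)

lemma conj_recip_root:
  assumes root: "poly (map_poly \<phi> f) \<gamma> = 0"
  shows "poly (map_poly \<phi> (conj_recip q f)) (inverse \<gamma> ^ q) = 0"
proof -
  have "poly (map_poly \<phi> (recip_poly f)) (inverse \<gamma>) = 0"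
    using root root_nonzero[OF root]
    by (simp add: recip_poly_def hom_distribs map_poly_reflect_poly poly_reflect_poly_nz)
  then show ?thesis
    using q_pos by (simp add: conj_recip_def poly_conj_poly)
qed

lemma conj_recip_eq_if_dvd:
  assumes "f dvd conj_recip q f"
  shows "conj_recip q f = f"
  using degree_conj_recip[OF poly_0_nonzero q_pos] lead_coeff_conj_recip[OF poly_0_nonzero q_pos]
  by (intro monic_dvd_eq[OF assms, symmetric]) (simp_all add: monic)

lemma inverse_frobenius_imp_dvd:
  assumes root: "poly (map_poly \<phi> f) \<beta> = 0" and inv: "\<beta> ^ (q ^ j) * \<beta> = 1"
  shows "n dvd j"
proof -
  have inv': "\<beta> ^ (q ^ j) = inverse \<beta>"
    using inv by (metis inverse_unique mult.commute)
  have "CARD('a) ^ j = q ^ j * q ^ j"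
    by (simp add: card_base_eq power2_eq_square power_mult_distrib)
  then have "\<beta> ^ (CARD('a) ^ j) = (\<beta> ^ (q ^ j)) ^ (q ^ j)"
    by (simp add: power_mult)
  also have "\<dots> = \<beta>"
    by (simp add: inv' power_inverse)
  finally show ?thesis
    using root_power_card_eq_self_iff[OF root] by simp
qed

text \<open>The exponent \<open>i\<close> ranges over \<open>1..n\<close> rather than \<open>0..<n\<close>, so that \<open>2 * i - 1\<close>
  below does not truncate.\<close>

lemma roots_are_conjugates:
  assumes root: "poly (map_poly \<phi> f) \<beta> = 0" and "poly (map_poly \<phi> f) \<gamma> = 0"
  shows "\<exists>i. 0 < i \<and> i \<le> n \<and> \<gamma> = \<beta> ^ (CARD('a) ^ i)"
proof -
  obtain i where "i < n" and \<gamma>: "\<gamma> = \<beta> ^ (CARD('a) ^ i)"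
    using assms(2) by (auto simp: map_poly_eq_prod_conjugates[OF root] poly_prod)
  show ?thesis
  proof (cases "i = 0")
    case True
    then have "\<gamma> = \<beta> ^ (CARD('a) ^ n)"
      using \<gamma> root_power_card_eq_self_iff[OF root, of n] by simp
    with n_pos show ?thesis
      by blast
  qed (use \<open>i < n\<close> \<gamma> in auto)
qed

lemma order_not_dvd_power_plus_1:
  assumes root: "poly (map_poly \<phi> f) \<beta> = 0" and prim: "primitive_root_of_unity d \<beta>"
    and "k < n"
  shows "\<not> d dvd q ^ k + 1"
proof
  assume "d dvd q ^ k + 1"
  then have inv: "\<beta> ^ (q ^ k) * \<beta> = 1"
    using primitive_root_of_unity_power_eq_1_iff[OF prim, of "q ^ k + 1"] by (simp add: mult.commute)
  then have "n dvd k"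
    by (rule inverse_frobenius_imp_dvd[OF root])
  with \<open>k < n\<close> have "k = 0"
    by (auto dest: dvd_imp_le)
  with inv have "\<beta> = 1 \<or> \<beta> = - 1"
    by (simp add: square_eq_1_iff)
  then obtain c where "\<beta> = \<phi> c"
    by (metis hom_one hom_uminus)
  then have "\<beta> ^ (CARD('a) ^ 1) = \<beta>"
    by (simp add: finite_field_power_card_eq_self flip: hom_power)
  then have "n dvd 1"
    using root_power_card_eq_self_iff[OF root] by blast
  with n_ge_3 show False
    by simp
qed

lemma self_conj_recip_imp_inverse_frobenius:
  assumes root: "poly (map_poly \<phi> f) \<beta> = 0" and "self_conj_recip q f"
  shows "\<beta> ^ (q ^ n) * \<beta> = 1"
proof -
  have "poly (map_poly \<phi> f) (inverse \<beta> ^ q) = 0"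
    using conj_recip_root[OF root] assms(2) by (simp add: self_conj_recip_def)
  then obtain i where i: "0 < i" "i \<le> n" and eq: "inverse \<beta> ^ q = \<beta> ^ (CARD('a) ^ i)"
    using roots_are_conjugates[OF root] by blast
  have "CARD('a) ^ i = q ^ Suc (2 * i - 1)"
    using i by (simp add: card_base_eq flip: power_mult)
  then have "CARD('a) ^ i = q ^ (2 * i - 1) * q"
    by (simp only: power_Suc2)
  with eq have "(\<beta> ^ (q ^ (2 * i - 1))) ^ (p ^ e) = (inverse \<beta>) ^ (p ^ e)"
    by (simp add: power_mult q_def)
  then have "\<beta> ^ (q ^ (2 * i - 1)) = inverse \<beta>"
    by (rule power_prime_power_inj)
  then have inv: "\<beta> ^ (q ^ (2 * i - 1)) * \<beta> = 1"
    using root_nonzero[OF root] by simp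
  then have "n dvd 2 * i - 1"
    by (rule inverse_frobenius_imp_dvd[OF root])
  then obtain t where t: "2 * i - 1 = n * t" ..
  have "odd (n * t)"
    using t i by presburger
  moreover have "n * t < n * 2"
    using t i by linarith
  ultimately have "t = 1"
    by simp presburger
  with inv t show ?thesis
    by simp
qed

lemma inverse_frobenius_imp_self_conj_recip:
  assumes root: "poly (map_poly \<phi> f) \<beta> = 0" and inv: "\<beta> ^ (q ^ n) * \<beta> = 1"
  shows "self_conj_recip q f"
proof -
  have "2 * ((n + 1) div 2) = Suc n"
    using odd_n by presburger
  then have "CARD('a) ^ ((n + 1) div 2) = q ^ n * q"
    by (simp add: card_base_eq flip: power_mult power_Suc2)
  moreover have "\<beta> ^ (q ^ n) = inverse \<beta>"
    using inv by (metis inverse_unique mult.commute)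
  ultimately have "\<beta> ^ (CARD('a) ^ ((n + 1) div 2)) = inverse \<beta> ^ q"
    by (simp add: power_mult)
  then have "poly (map_poly \<phi> f) (inverse \<beta> ^ q) = 0"
    by (metis root_power_card[OF root])
  then have "poly (map_poly \<phi> (conj_recip q f)) (inverse (inverse \<beta> ^ q) ^ q) = 0"
    by (rule conj_recip_root)
  moreover have "inverse (inverse \<beta> ^ q) ^ q = \<beta> ^ (CARD('a) ^ 1)"
    by (simp add: card_base_eq power_inverse power2_eq_square power_mult)
  ultimately have "f dvd conj_recip q f"
    using root_dvd_iff[OF root_power_card[OF root, of 1]] by simp
  then show ?thesis
    by (simp add: self_conj_recip_def conj_recip_eq_if_dvd)
qed

lemma self_conj_recip_iff_order_in_Dset:
  assumes root: "poly (map_poly \<phi> f) \<beta> = 0" and prim: "primitive_root_of_unity d \<beta>"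
  shows "self_conj_recip q f \<longleftrightarrow> d \<in> Dset q n"
proof -
  have "d \<in> Dset q n \<longleftrightarrow> d dvd q ^ n + 1"
    using order_not_dvd_power_plus_1[OF root prim] prim
    by (auto simp: Dset_def primitive_root_of_unity_def)
  also have "\<dots> \<longleftrightarrow> \<beta> ^ (q ^ n) * \<beta> = 1"
    using primitive_root_of_unity_power_eq_1_iff[OF prim, of "q ^ n + 1"] by (simp add: mult.commute)
  also have "\<dots> \<longleftrightarrow> self_conj_recip q f"
    using self_conj_recip_imp_inverse_frobenius[OF root] inverse_frobenius_imp_self_conj_recip[OF root]
    by blast
  finally show ?thesis ..
qed

lemma map_poly_eq_f_beta:
  assumes "poly (map_poly \<phi> f) \<beta> = 0"
  shows "map_poly \<phi> f = f_beta q n \<beta>"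
  by (simp add: map_poly_eq_prod_conjugates[OF assms] f_beta_def card_base_eq power_mult)

lemma root_f_beta: "poly (f_beta q n \<beta>) \<beta> = 0"
  using n_pos by (auto simp: f_beta_def poly_prod intro: prod_zero bexI[of _ 0])

theorem self_conj_recip_characterization:
  "(self_conj_recip q f \<longleftrightarrow> poly_ord f \<in> Dset q n) \<and>
   (poly_ord f \<in> Dset q n \<longleftrightarrow>
      (\<exists>d \<in> Dset q n. \<exists>\<beta>. primitive_root_of_unity d \<beta> \<and> map_poly \<phi> f = f_beta q n \<beta>))"
proof -
  obtain \<beta> where root: "poly (map_poly \<phi> f) \<beta> = 0"
    using ex_root by blast
  obtain d where prim: "primitive_root_of_unity d \<beta>"
    using ex_order_of_root[OF root] by blast
  have ord: "poly_ord f = d"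
    using root prim by (rule poly_ord_eq_order_of_root)
  have "(\<exists>d' \<in> Dset q n. \<exists>\<gamma>. primitive_root_of_unity d' \<gamma> \<and> map_poly \<phi> f = f_beta q n \<gamma>)
      \<longleftrightarrow> d \<in> Dset q n"
  proof
    assume "\<exists>d' \<in> Dset q n. \<exists>\<gamma>. primitive_root_of_unity d' \<gamma> \<and> map_poly \<phi> f = f_beta q n \<gamma>"
    then obtain d' \<gamma> where "d' \<in> Dset q n" "primitive_root_of_unity d' \<gamma>" "map_poly \<phi> f = f_beta q n \<gamma>"
      by blast
    with ord root_f_beta[of \<gamma>] poly_ord_eq_order_of_root show "d \<in> Dset q n"
      by metis
  qed (use prim map_poly_eq_f_beta[OF root] in blast)
  with self_conj_recip_iff_order_in_Dset[OF root prim] ord show ?thesis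
    by blast
qed

end

theorem mainTheorem9:
  fixes q n :: nat
    and f :: "'a::{field,finite} poly"
    and \<phi> :: "'a \<Rightarrow> 'b::{field,finite}"
  assumes "prime_power q"
    and "card (UNIV :: 'a set) = q ^ 2"
    and "card (UNIV :: 'b set) = q ^ (2 * n)"
    and "\<forall>x y. \<phi> (x + y) = \<phi> x + \<phi> y"
    and "\<forall>x y. \<phi> (x * y) = \<phi> x * \<phi> y"
    and "\<phi> 1 = 1"
    and "odd n" and "n \<ge> 3"
    and "irreducible f" and "lead_coeff f = 1" and "degree f = n"
  shows "(self_conj_recip q f \<longleftrightarrow> poly_ord f \<in> Dset q n) \<and>
         (poly_ord f \<in> Dset q n \<longleftrightarrow>
            (\<exists>d \<in> Dset q n. \<exists>\<beta>::'b. primitive_root_of_unity d \<beta> \<and>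
                map_poly \<phi> f = f_beta q n \<beta>))"
proof -
  obtain p e where p: "prime p" and q: "q = p ^ e"
    using assms(1) by (auto simp: prime_power_def)
  have "\<phi> 0 = 0"
    using assms(4) by (metis add_cancel_right_right add_0)
  then interpret conj_recip_setting \<phi> p e n f q
    using assms p q by unfold_locales (auto simp flip: power_mult simp: ac_simps)
  show ?thesis
    by (rule self_conj_recip_characterization)
qed

end
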